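(* Let $G$ be a finite connected graph with $\chi(G)<0$ and no vertices of valence 1 or 2. If $\ell\in\mathcal M(G)$ satisfies $\mathfrak h_G(\ell)<1$, then $F_G(\ell)>0$.
   Context: $G$ has oriented edges $E$, involution $e\mapsto\bar e$, orientation $E_+$; $\mathcal M(G)=\mathbb R_{>0}^{|E_+|}$ is the set of length functions $\ell\colon E_+\to\mathbb R_{>0}$ (extended to $E$ by $\ell(\bar e)=\ell(e)$). Entropy $\mathfrak h_G(\ell)=\lim_{t\to\infty}\frac1t\log\#\{\text{based circuits }\gamma:\ell(\gamma)\le t\}$, where a based circuit is a reduced closed edge path $(e_1,\dots,e_n)$ with $e_{i+1}\ne\bar e_i$ and $e_n\neq\bar e_1$. $A_G$ is the $|E|\times|E|$ matrix with $A_G(e,e')=1$ if $\tau(e)=o(e')$ and $e'\ne\bar e$, else $0$; $A_{G,\ell}(e,e')=A_G(e,e')\exp(-\ell(e))$, and $F_G(\ell)=\det(I-A_{G,\ell})$. *)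

theory Defs
  imports "HOL-Analysis.Analysis"
begin

text \<open>A finite graph in Serre's sense: vertex type 'v (all of it), oriented edge type 'e
  (all of it), origin map org, terminus map tau, fixed-point-free involution bar
  with org (bar e) = tau e.\<close>

definition serre_graph :: "('e \<Rightarrow> 'v) \<Rightarrow> ('e \<Rightarrow> 'v) \<Rightarrow> ('e \<Rightarrow> 'e) \<Rightarrow> bool" where
  "serre_graph org tau bar \<longleftrightarrow>
     (\<forall>e. bar (bar e) = e \<and> bar e \<noteq> e \<and> org (bar e) = tau e)"

definition graph_connected :: "('e \<Rightarrow> 'v) \<Rightarrow> ('e \<Rightarrow> 'v) \<Rightarrow> bool" where
  "graph_connected org tau \<longleftrightarrow>
     (\<forall>v w. (\<lambda>x y. \<exists>e. org e = x \<and> tau e = y)\<^sup>*\<^sup>* v w)"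

text \<open>Valence of v: number of oriented edges with origin v (a loop counts twice).\<close>
definition valence :: "('e::finite \<Rightarrow> 'v) \<Rightarrow> 'v \<Rightarrow> nat" where
  "valence org v = card {e. org e = v}"

text \<open>Euler characteristic |V| - |E_+| where |E_+| = |E| / 2.\<close>
definition euler_char :: "('e::finite \<Rightarrow> 'v::finite) \<Rightarrow> real" where
  "euler_char org = real CARD('v) - real CARD('e) / 2"

text \<open>Length functions: positive and bar-invariant (equivalently, positive functions on E_+).\<close>
definition length_fun :: "('e \<Rightarrow> 'e) \<Rightarrow> ('e \<Rightarrow> real) \<Rightarrow> bool" where
  "length_fun bar l \<longleftrightarrow> (\<forall>e. l e > 0 \<and> l (bar e) = l e)"

text \<open>Based circuit: nonempty reduced closed edge path (indices cyclic).\<close>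
definition based_circuit :: "('e \<Rightarrow> 'v) \<Rightarrow> ('e \<Rightarrow> 'v) \<Rightarrow> ('e \<Rightarrow> 'e) \<Rightarrow> 'e list \<Rightarrow> bool" where
  "based_circuit org tau bar \<gamma> \<longleftrightarrow> \<gamma> \<noteq> [] \<and>
     (\<forall>i < length \<gamma>. tau (\<gamma> ! i) = org (\<gamma> ! ((i + 1) mod length \<gamma>)) \<and>
                      \<gamma> ! ((i + 1) mod length \<gamma>) \<noteq> bar (\<gamma> ! i))"

definition circuit_count :: "('e \<Rightarrow> 'v) \<Rightarrow> ('e \<Rightarrow> 'v) \<Rightarrow> ('e \<Rightarrow> 'e) \<Rightarrow> ('e \<Rightarrow> real) \<Rightarrow> real \<Rightarrow> nat" where
  "circuit_count org tau bar l t = card {\<gamma>. based_circuit org tau bar \<gamma> \<and> sum_list (map l \<gamma>) \<le> t}"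

definition entropy :: "('e \<Rightarrow> 'v) \<Rightarrow> ('e \<Rightarrow> 'v) \<Rightarrow> ('e \<Rightarrow> 'e) \<Rightarrow> ('e \<Rightarrow> real) \<Rightarrow> real" where
  "entropy org tau bar l = Lim at_top (\<lambda>t. ln (real (circuit_count org tau bar l t)) / t)"

definition trans_matrix :: "('e::finite \<Rightarrow> 'v) \<Rightarrow> ('e \<Rightarrow> 'v) \<Rightarrow> ('e \<Rightarrow> 'e) \<Rightarrow> ('e \<Rightarrow> real) \<Rightarrow> real^'e^'e" where
  "trans_matrix org tau bar l = (\<chi> e e'. if tau e = org e' \<and> e' \<noteq> bar e then exp (- l e) else 0)"

definition F_G :: "('e::finite \<Rightarrow> 'v) \<Rightarrow> ('e \<Rightarrow> 'v) \<Rightarrow> ('e \<Rightarrow> 'e) \<Rightarrow> ('e \<Rightarrow> real) \<Rightarrow> real" where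
  "F_G org tau bar l = det (mat 1 - trans_matrix org tau bar l)"

end

theory Submission
  imports Defs "HOL-Real_Asymp.Real_Asymp"
begin

text \<open>Let A be the matrix of the theorem. The trace of A^k is the sum of exp(-l(gamma)) over the based
  circuits gamma with k edges, so grouping circuits by their length rounded up and using
  N(t) <= C exp(s t) for some s < 1 (possible as the entropy is < 1) bounds all partial sums of
  tr A^k by a geometric series. If det (I - A) <= 0, then det (I - s A) vanishes for some s in (0,1]
  and A has a nonzero nonnegative subinvariant vector y <= A y. Without vertices of valence 1 or 2
  the non-backtracking successor relation on edges is strongly connected, so A is irreducible, and
  a subinvariant vector then bounds the traces of A^k from below on average, so their partial sums
  are unbounded. Since the entropy is defined as a Lim, one also needs that the limit exists; this
  follows from a Fekete-type argument for circuits based at a fixed edge, which can be concatenated.\<close>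

section \<open>Growth rates\<close>

lemma floor_multiple_ratio_tendsto:
  fixes T t0 :: real
  assumes "T > 0"
  shows "((\<lambda>t. real (nat \<lfloor>(t - t0) / T\<rfloor>) * T / t) \<longlongrightarrow> 1) at_top"
proof (rule tendsto_sandwich)
  have bounds: "t - t0 - T \<le> real (nat \<lfloor>(t - t0) / T\<rfloor>) * T \<and> real (nat \<lfloor>(t - t0) / T\<rfloor>) * T \<le> t - t0"
    if "t \<ge> t0" for t
  proof -
    have "(t - t0) / T - 1 \<le> real (nat \<lfloor>(t - t0) / T\<rfloor>)" "real (nat \<lfloor>(t - t0) / T\<rfloor>) \<le> (t - t0) / T"
      using that assms by (simp_all add: of_nat_floor)
    thus ?thesis using assms by (simp add: field_simps)
  qed
  show "eventually (\<lambda>t. (t - t0 - T) / t \<le> real (nat \<lfloor>(t - t0) / T\<rfloor>) * T / t) at_top"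
    using eventually_gt_at_top[of "max t0 0"]
    by eventually_elim (use bounds in \<open>auto intro: divide_right_mono\<close>)
  show "eventually (\<lambda>t. real (nat \<lfloor>(t - t0) / T\<rfloor>) * T / t \<le> (t - t0) / t) at_top"
    using eventually_gt_at_top[of "max t0 0"]
    by eventually_elim (use bounds in \<open>auto intro: divide_right_mono\<close>)
  show "((\<lambda>t. (t - t0 - T) / t) \<longlongrightarrow> 1) at_top" "((\<lambda>t. (t - t0) / t) \<longlongrightarrow> 1) at_top"
    by real_asymp+
qed


lemma supermultiplicative_iterate:
  fixes L :: "real \<Rightarrow> real"
  assumes sm: "\<And>a b. a \<ge> 0 \<Longrightarrow> b \<ge> 0 \<Longrightarrow> L a * L b \<le> (1 + a / C) * L (a + b)"
    and C: "C \<ge> 0" and T: "T \<ge> 0" "L T \<ge> 0" and r: "r \<ge> 0"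
  shows "(L T / (1 + T / C)) ^ k * L r \<le> L (real k * T + r)"
proof (induction k)
  case (Suc k)
  have pos: "1 + T / C > 0" using C T by (simp add: add_pos_nonneg)
  have "(L T / (1 + T / C)) ^ Suc k * L r = L T / (1 + T / C) * ((L T / (1 + T / C)) ^ k * L r)"
    by simp
  also have "\<dots> \<le> L T / (1 + T / C) * L (real k * T + r)"
    using pos T by (intro mult_left_mono[OF Suc.IH]) simp
  also have "\<dots> \<le> L (T + (real k * T + r))"
    using sm[of T "real k * T + r"] pos T r by (simp add: field_simps)
  finally show ?case by (simp add: algebra_simps)
qed simp

lemma supermultiplicative_log_growth_lower:
  fixes L :: "real \<Rightarrow> real"
  assumes C: "C > 0" and t0: "t0 \<ge> 0"
    and ge1: "\<And>t. t \<ge> t0 \<Longrightarrow> L t \<ge> 1"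
    and sm: "\<And>a b. a \<ge> 0 \<Longrightarrow> b \<ge> 0 \<Longrightarrow> L a * L b \<le> (1 + a / C) * L (a + b)"
    and T: "T \<ge> t0" "T > 0" and a: "a < ln (L T / (1 + T / C)) / T"
  shows "eventually (\<lambda>t. a < ln (L t) / t) at_top"
proof -
  define p where "p = ln (L T / (1 + T / C)) / T"
  define k where "k t = nat \<lfloor>(t - t0) / T\<rfloor>" for t
  have g: "L T / (1 + T / C) > 0" using ge1[OF T(1)] T C by (simp add: add_pos_nonneg)
  have lower: "real (k t) * T * p \<le> ln (L t)" if "t \<ge> t0" for t
  proof -
    define r where "r = t - real (k t) * T"
    have "real (k t) \<le> (t - t0) / T" unfolding k_def using that T by simp
    hence r: "r \<ge> t0" unfolding r_def using T by (simp add: field_simps)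
    have "(L T / (1 + T / C)) ^ k t \<le> (L T / (1 + T / C)) ^ k t * L r"
      using ge1[OF r] g by simp
    also have "\<dots> \<le> L t"
      using supermultiplicative_iterate[OF sm, of T r "k t"] ge1[OF T(1)] C T t0 r
      unfolding r_def by simp
    finally have "ln ((L T / (1 + T / C)) ^ k t) \<le> ln (L t)" using g by (intro ln_mono) auto
    thus ?thesis unfolding p_def using g T by (simp add: ln_realpow)
  qed
  have "((\<lambda>t. real (k t) * T / t * p) \<longlongrightarrow> 1 * p) at_top"
    unfolding k_def by (intro tendsto_mult floor_multiple_ratio_tendsto T tendsto_const)
  hence "eventually (\<lambda>t. a < real (k t) * T / t * p) at_top"
    using a unfolding p_def by (simp add: order_tendstoD)
  with eventually_gt_at_top[of t0]
  show "eventually (\<lambda>t. a < ln (L t) / t) at_top"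
  proof eventually_elim
    case (elim t)
    hence "real (k t) * T / t * p \<le> ln (L t) / t"
      using lower[of t] t0 by (simp add: divide_right_mono)
    thus ?case using elim by linarith
  qed
qed

lemma log_growth_of_supermultiplicative:
  fixes L :: "real \<Rightarrow> real"
  assumes C: "C > 0" and t0: "t0 \<ge> 0"
    and ge1: "\<And>t. t \<ge> t0 \<Longrightarrow> L t \<ge> 1"
    and up: "\<And>t. t \<ge> t0 \<Longrightarrow> ln (L t) \<le> \<alpha> * t"
    and sm: "\<And>a b. a \<ge> 0 \<Longrightarrow> b \<ge> 0 \<Longrightarrow> L a * L b \<le> (1 + a / C) * L (a + b)"
  shows "\<exists>H. ((\<lambda>t. ln (L t) / t) \<longlongrightarrow> H) at_top"
proof -
  define \<phi> where "\<phi> T = ln (L T / (1 + T / C)) / T" for T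
  define H where "H = (SUP T\<in>{t0 + 1..}. \<phi> T)"
  have ln_split: "ln (L T / (1 + T / C)) = ln (L T) - ln (1 + T / C)" if "T \<ge> t0" for T
  proof -
    have "L T > 0" "1 + T / C > 0" using ge1[OF that] C t0 that by (auto intro: add_pos_nonneg)
    thus ?thesis by (simp add: ln_div)
  qed
  have "\<phi> T \<le> \<alpha>" if "T \<in> {t0 + 1..}" for T
  proof -
    have "0 \<le> ln (1 + T / C)" using C t0 that by simp
    moreover have "T \<ge> t0" using that by simp
    ultimately have "ln (L T / (1 + T / C)) \<le> \<alpha> * T" using ln_split up by fastforce
    thus ?thesis unfolding \<phi>_def using t0 that by (simp add: divide_le_eq)
  qed
  hence bdd: "bdd_above (\<phi> ` {t0 + 1..})" by (intro bdd_aboveI2)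
  have "((\<lambda>t. ln (L t) / t) \<longlongrightarrow> H) at_top"
  proof (rule order_tendstoI)
    fix a assume "a > H"
    have "((\<lambda>t. ln (1 + t / C) / t) \<longlongrightarrow> 0) at_top" using C by real_asymp
    hence "eventually (\<lambda>t. ln (1 + t / C) / t < a - H) at_top"
      using \<open>a > H\<close> by (simp add: order_tendstoD)
    with eventually_ge_at_top[of "t0 + 1"]
    show "eventually (\<lambda>t. ln (L t) / t < a) at_top"
    proof eventually_elim
      case (elim t)
      have "\<phi> t \<le> H" unfolding H_def using bdd elim(1) by (intro cSUP_upper) auto
      moreover have "ln (L t) / t = \<phi> t + ln (1 + t / C) / t"
        unfolding \<phi>_def using ln_split[of t] elim(1) by (simp add: diff_divide_distrib)
      ultimately show ?case using elim(2) by linarith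
    qed
  next
    fix a assume "a < H"
    then obtain T where T: "T \<ge> t0 + 1" "a < \<phi> T"
      using less_cSUP_iff[OF _ bdd] unfolding H_def by auto
    show "eventually (\<lambda>t. a < ln (L t) / t) at_top"
      by (rule supermultiplicative_log_growth_lower[OF C t0 ge1 sm, of T]) (use T t0 in \<open>simp_all add: \<phi>_def\<close>)
  qed
  thus ?thesis by blast
qed

lemma log_growth_sum:
  fixes L :: "'i::finite \<Rightarrow> real \<Rightarrow> real"
  assumes lim: "\<And>i. ((\<lambda>t. ln (L i t) / t) \<longlongrightarrow> H i) at_top"
    and ge1: "\<And>i. eventually (\<lambda>t. L i t \<ge> 1) at_top"
  shows "((\<lambda>t. ln (\<Sum>i\<in>UNIV. L i t) / t) \<longlongrightarrow> (SUP i. H i)) at_top"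
proof (rule tendsto_sandwich)
  define m where "m t = (SUP i. ln (L i t) / t)" for t
  have m_lim: "(m \<longlongrightarrow> (SUP i. H i)) at_top"
    unfolding m_def using lim by (intro tendsto_Sup) auto
  have ev: "eventually (\<lambda>t. t > 0 \<and> (\<forall>i. L i t \<ge> 1)) at_top"
    using eventually_gt_at_top[of 0] eventually_all_finite[OF ge1] by eventually_elim auto
  have bounds: "m t \<le> ln (\<Sum>i\<in>UNIV. L i t) / t \<and> ln (\<Sum>i\<in>UNIV. L i t) / t \<le> ln (real CARD('i)) / t + m t"
    if t: "t > 0" and L: "\<And>i. L i t \<ge> 1" for t
  proof
    have L_pos: "L i t > 0" for i using L[of i] by simp
    have le_m: "ln (L i t) / t \<le> m t" for i unfolding m_def by (intro cSUP_upper) auto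
    have "ln (L i t) \<le> ln (\<Sum>j\<in>UNIV. L j t)" for i
      using L_pos by (intro ln_mono member_le_sum) (auto intro: less_imp_le)
    thus "m t \<le> ln (\<Sum>i\<in>UNIV. L i t) / t" unfolding m_def using t by (intro cSUP_least divide_right_mono) auto
    have "L i t \<le> exp (t * m t)" for i
    proof -
      have "ln (L i t) \<le> t * m t" using le_m[of i] t by (simp add: divide_le_eq mult.commute)
      thus ?thesis using L_pos[of i] by (metis exp_le_cancel_iff exp_ln)
    qed
    hence "(\<Sum>i\<in>UNIV. L i t) \<le> real CARD('i) * exp (t * m t)"
      using sum_mono[of UNIV "\<lambda>i. L i t" "\<lambda>_. exp (t * m t)"] by simp
    hence "ln (\<Sum>i\<in>UNIV. L i t) \<le> ln (real CARD('i) * exp (t * m t))"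
      using L_pos by (intro ln_mono) (auto intro: sum_pos)
    also have "\<dots> = ln (real CARD('i)) + t * m t" by (simp add: ln_mult)
    finally show "ln (\<Sum>i\<in>UNIV. L i t) / t \<le> ln (real CARD('i)) / t + m t"
      using t by (simp add: divide_le_eq algebra_simps)
  qed
  show "eventually (\<lambda>t. m t \<le> ln (\<Sum>i\<in>UNIV. L i t) / t) at_top"
    using ev by eventually_elim (use bounds in blast)
  show "eventually (\<lambda>t. ln (\<Sum>i\<in>UNIV. L i t) / t \<le> ln (real CARD('i)) / t + m t) at_top"
    using ev by eventually_elim (use bounds in blast)
  show "(m \<longlongrightarrow> (SUP i. H i)) at_top" by (rule m_lim)
  have "((\<lambda>t. ln (real CARD('i)) / t) \<longlongrightarrow> 0) at_top" by real_asymp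
  thus "((\<lambda>t. ln (real CARD('i)) / t + m t) \<longlongrightarrow> (SUP i. H i)) at_top"
    using tendsto_add[OF _ m_lim] by fastforce
qed

lemma sum_power_le_geometric:
  fixes q :: real and K :: "nat set"
  assumes "finite K" "0 \<le> q" "q < 1"
  shows "(\<Sum>k\<in>K. q ^ k) \<le> 1 / (1 - q)"
proof -
  obtain R where "K \<subseteq> {..<R}" using finite_nat_iff_bounded assms(1) by blast
  hence "(\<Sum>k\<in>K. q ^ k) \<le> (\<Sum>k<R. q ^ k)" using assms(2) by (intro sum_mono2) auto
  also have "\<dots> \<le> 1 / (1 - q)" using assms(2,3) by (simp add: sum_gp_strict divide_right_mono)
  finally show ?thesis .
qed

section \<open>Nonnegative matrices\<close>

lemma matrix_nonneg_iff: "0 \<le> A \<longleftrightarrow> (\<forall>i j. 0 \<le> A $ i $ j)"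
  for A :: "'a::{zero,order}^'n^'m"
  by (simp add: less_eq_vec_def)

lemma matrix_mul_nonneg:
  fixes A :: "'a::linordered_semidom^'n^'m" and B :: "'a^'p^'n"
  shows "0 \<le> A \<Longrightarrow> 0 \<le> B \<Longrightarrow> 0 \<le> A ** B"
  by (auto simp: matrix_nonneg_iff matrix_matrix_mult_def intro!: sum_nonneg mult_nonneg_nonneg)

lemma matrix_vector_mult_mono:
  fixes A :: "'a::linordered_semidom^'n^'m"
  shows "0 \<le> A \<Longrightarrow> x \<le> y \<Longrightarrow> A *v x \<le> A *v y"
  by (auto simp: less_eq_vec_def matrix_vector_mult_def intro!: sum_mono mult_left_mono)

definition matrix_pow :: "'a::semiring_1^'n^'n \<Rightarrow> nat \<Rightarrow> 'a^'n^'n" where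
  "matrix_pow A n = ((**) A ^^ n) (mat 1)"

lemma matrix_pow_0 [simp]: "matrix_pow A 0 = mat 1"
  and matrix_pow_Suc [simp]: "matrix_pow A (Suc n) = A ** matrix_pow A n"
  by (simp_all add: matrix_pow_def)

lemma matrix_pow_add: "matrix_pow A (m + n) = matrix_pow A m ** matrix_pow A n"
  by (induction m) (simp_all add: matrix_mul_assoc)

lemma matrix_pow_nonneg:
  fixes A :: "'a::linordered_semidom^'n^'n"
  assumes "0 \<le> A"
  shows "0 \<le> matrix_pow A n"
proof (induction n)
  case 0
  show ?case by (simp add: matrix_nonneg_iff mat_def)
next
  case (Suc n)
  thus ?case using assms by (simp add: matrix_mul_nonneg)
qed

definition irreducible_matrix :: "real^'n^'n \<Rightarrow> bool" where
  "irreducible_matrix A \<longleftrightarrow> (\<forall>i j. \<exists>k\<ge>1. 0 < matrix_pow A k $ i $ j)"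

lemma matrix_pow_pos_of_walk:
  fixes A :: "real^'n^'n"
  assumes "0 \<le> A" "successively (\<lambda>i j. 0 < A $ i $ j) (i # ws)"
  shows "0 < matrix_pow A (length ws) $ i $ last (i # ws)"
  using assms(2)
proof (induction ws arbitrary: i)
  case (Cons j ws)
  have "A $ i $ j * matrix_pow A (length ws) $ j $ last (j # ws)
          \<le> (\<Sum>k\<in>UNIV. A $ i $ k * matrix_pow A (length ws) $ k $ last (j # ws))"
    using assms(1) matrix_pow_nonneg[OF assms(1)]
    by (intro member_le_sum) (auto simp: matrix_nonneg_iff)
  moreover have "0 < A $ i $ j * matrix_pow A (length ws) $ j $ last (j # ws)"
    using Cons by simp
  ultimately show ?case by (simp add: matrix_matrix_mult_def)
qed (simp add: mat_def)

lemma subinvariant_vector_of_det_nonpos: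
  fixes A :: "real^'n^'n"
  assumes A: "0 \<le> A" and det: "det (mat 1 - A) \<le> 0"
  shows "\<exists>y. 0 \<le> y \<and> y \<noteq> 0 \<and> y \<le> A *v y"
proof -
  define g where "g s = det (mat 1 - s *\<^sub>R A)" for s
  have "continuous_on {0..1} g"
    unfolding g_def det_def by (intro continuous_intros)
  moreover have "g 0 = 1" "g 1 \<le> 0" using det by (simp_all add: g_def)
  ultimately obtain s where s: "0 \<le> s" "s \<le> 1" "g s = 0"
    using IVT2'[of g 1 0 0] by auto
  have "s \<noteq> 0" using s \<open>g 0 = 1\<close> by auto
  obtain x where x: "x \<noteq> 0" "(mat 1 - s *\<^sub>R A) *v x = 0"
    using s(3) matrix_nonfull_linear_equations_eq[of "mat 1 - s *\<^sub>R A"]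
    unfolding g_def det_eq_0_rank by auto
  hence x_eq: "x = s *\<^sub>R (A *v x)"
    by (simp add: matrix_vector_mult_diff_rdistrib scaleR_matrix_vector_assoc)
  define y where "y = (\<chi> i. \<bar>x $ i\<bar>)"
  have "y $ i \<le> (A *v y) $ i" for i
  proof -
    have "y $ i = s * \<bar>(A *v x) $ i\<bar>"
      using arg_cong[OF x_eq, of "\<lambda>v. \<bar>v $ i\<bar>"] s(1) by (simp add: y_def abs_mult)
    also have "\<bar>(A *v x) $ i\<bar> \<le> (A *v y) $ i"
      using A by (auto simp: matrix_vector_mult_def y_def matrix_nonneg_iff abs_mult
          intro!: order_trans[OF sum_abs] sum_mono)
    hence "s * \<bar>(A *v x) $ i\<bar> \<le> (A *v y) $ i"
      using s(1,2) by (smt (verit) mult_left_le_one_le abs_ge_zero)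
    finally show ?thesis .
  qed
  moreover have "y \<noteq> 0" using x by (auto simp: y_def vec_eq_iff)
  ultimately show ?thesis by (intro exI[of _ y]) (auto simp: y_def less_eq_vec_def)
qed

lemma subinvariant_le_matrix_pow:
  fixes A :: "real^'n^'n"
  assumes "0 \<le> A" "y \<le> A *v y"
  shows "y \<le> matrix_pow A n *v y"
proof (induction n)
  case (Suc n)
  have "y \<le> A *v y" by (rule assms(2))
  also have "\<dots> \<le> A *v (matrix_pow A n *v y)" using assms(1) Suc by (rule matrix_vector_mult_mono)
  finally show ?case by (simp add: matrix_vector_mul_assoc)
qed simp

lemma subinvariant_row_sum_ge_one:
  fixes A :: "real^'n^'n"
  assumes A: "0 \<le> A" and y: "0 \<le> y" "y \<noteq> 0" "y \<le> A *v y"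
  obtains i where "\<And>n. 1 \<le> (\<Sum>j\<in>UNIV. matrix_pow A n $ i $ j)"
proof -
  have "Max (range (($) y)) \<in> range (($) y)" by (rule Max_in) auto
  then obtain i where i: "y $ i = Max (range (($) y))" by (metis imageE)
  have y_le: "y $ j \<le> y $ i" for j unfolding i by simp
  have "y $ i > 0"
  proof -
    obtain j where "y $ j \<noteq> 0" using y(2) by (auto simp: vec_eq_iff)
    moreover have "0 \<le> y $ j" using y(1) by (simp add: less_eq_vec_def)
    ultimately show ?thesis using y_le[of j] by linarith
  qed
  have "1 \<le> (\<Sum>j\<in>UNIV. matrix_pow A n $ i $ j)" for n
  proof -
    have "y $ i \<le> (\<Sum>j\<in>UNIV. matrix_pow A n $ i $ j * y $ j)"
      using subinvariant_le_matrix_pow[OF A y(3), of n] by (simp add: less_eq_vec_def matrix_vector_mult_def)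
    also have "\<dots> \<le> (\<Sum>j\<in>UNIV. matrix_pow A n $ i $ j) * y $ i"
      using matrix_pow_nonneg[OF A] y_le
      by (auto simp: sum_distrib_right matrix_nonneg_iff intro!: sum_mono mult_left_mono)
    finally show ?thesis using \<open>y $ i > 0\<close> by simp
  qed
  thus ?thesis by (rule that)
qed

lemma irreducible_return_weight:
  fixes A :: "real^'n^'n"
  assumes A: "0 \<le> A" and irred: "irreducible_matrix A"
  obtains c K where "c > 0" "\<And>j. c \<le> (\<Sum>k\<in>{1..K}. matrix_pow A k $ j $ i)"
proof -
  have "\<forall>j. \<exists>k. 1 \<le> k \<and> 0 < matrix_pow A k $ j $ i" using irred unfolding irreducible_matrix_def by blast
  then obtain kf where kf: "\<And>j. 1 \<le> kf j \<and> 0 < matrix_pow A (kf j) $ j $ i" by metis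
  define K where "K = Max (range kf)"
  define c where "c = Min (range (\<lambda>j. \<Sum>k\<in>{1..K}. matrix_pow A k $ j $ i))"
  have "0 < (\<Sum>k\<in>{1..K}. matrix_pow A k $ j $ i)" for j
  proof -
    have "kf j \<in> {1..K}" using kf unfolding K_def by simp
    hence "matrix_pow A (kf j) $ j $ i \<le> (\<Sum>k\<in>{1..K}. matrix_pow A k $ j $ i)"
      using matrix_pow_nonneg[OF A] by (intro member_le_sum) (auto simp: matrix_nonneg_iff)
    thus ?thesis using kf[of j] by linarith
  qed
  moreover have "c \<in> range (\<lambda>j. \<Sum>k\<in>{1..K}. matrix_pow A k $ j $ i)"
    unfolding c_def by (rule Min_in) auto
  ultimately have "c > 0" by auto
  moreover have "c \<le> (\<Sum>k\<in>{1..K}. matrix_pow A k $ j $ i)" for j unfolding c_def by simp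
  ultimately show ?thesis by (rule that)
qed

text \<open>At a maximal coordinate i of y, subinvariance makes every row sum of A^n at i at least 1, and
  irreducibility leads from every j back to i within K steps with weight at least c.\<close>

lemma trace_pow_block_sum_lower_bound:
  fixes A :: "real^'n^'n"
  assumes A: "0 \<le> A" and irred: "irreducible_matrix A"
    and y: "0 \<le> y" "y \<noteq> 0" "y \<le> A *v y"
  obtains c K where "c > 0" "\<And>n. c \<le> (\<Sum>k\<in>{1..K}. trace (matrix_pow A (n + k)))"
proof -
  obtain i where row: "\<And>n. 1 \<le> (\<Sum>j\<in>UNIV. matrix_pow A n $ i $ j)"
    using subinvariant_row_sum_ge_one[OF A y] by blast
  obtain c K where c: "c > 0" "\<And>j. c \<le> (\<Sum>k\<in>{1..K}. matrix_pow A k $ j $ i)"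
    using irreducible_return_weight[OF A irred] by blast
  have "c \<le> (\<Sum>k\<in>{1..K}. trace (matrix_pow A (n + k)))" for n
  proof -
    have nonneg: "0 \<le> matrix_pow A m $ a $ b" for m a b
      using matrix_pow_nonneg[OF A] by (simp add: matrix_nonneg_iff)
    have "c \<le> (\<Sum>j\<in>UNIV. matrix_pow A n $ i $ j) * c" using row[of n] c(1) by simp
    also have "\<dots> \<le> (\<Sum>j\<in>UNIV. matrix_pow A n $ i $ j * (\<Sum>k\<in>{1..K}. matrix_pow A k $ j $ i))"
      unfolding sum_distrib_right using c(2) nonneg by (intro sum_mono mult_left_mono) auto
    also have "\<dots> = (\<Sum>k\<in>{1..K}. \<Sum>j\<in>UNIV. matrix_pow A n $ i $ j * matrix_pow A k $ j $ i)"
      unfolding sum_distrib_left by (rule sum.swap)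
    also have "\<dots> = (\<Sum>k\<in>{1..K}. matrix_pow A (n + k) $ i $ i)"
      by (simp add: matrix_pow_add matrix_matrix_mult_def)
    also have "\<dots> \<le> (\<Sum>k\<in>{1..K}. trace (matrix_pow A (n + k)))"
      unfolding trace_def using nonneg by (intro sum_mono member_le_sum) auto
    finally show ?thesis .
  qed
  with c(1) show ?thesis using that by blast
qed

lemma block_sum_lower_bound:
  fixes z :: "nat \<Rightarrow> real"
  assumes "\<And>n. c \<le> (\<Sum>k\<in>{1..K}. z (n + k))"
  shows "real q * c \<le> (\<Sum>k\<in>{1..q * K}. z k)"
proof (induction q)
  case (Suc q)
  have "{1..Suc q * K} = {1..q * K} \<union> {1 + q * K..K + q * K}" by auto
  hence "(\<Sum>k\<in>{1..Suc q * K}. z k) = (\<Sum>k\<in>{1..q * K}. z k) + (\<Sum>k\<in>{1 + q * K..K + q * K}. z k)"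
    by (simp add: sum.union_disjoint)
  also have "(\<Sum>k\<in>{1 + q * K..K + q * K}. z k) = (\<Sum>k\<in>{1..K}. z (k + q * K))"
    by (rule sum.shift_bounds_cl_nat_ivl)
  also have "\<dots> = (\<Sum>k\<in>{1..K}. z (q * K + k))" by (simp add: add.commute)
  finally show ?case using Suc.IH assms[of "q * K"] by (simp add: algebra_simps)
qed simp

lemma trace_pow_partial_sums_unbounded:
  fixes A :: "real^'n^'n"
  assumes A: "0 \<le> A" and irred: "irreducible_matrix A"
    and y: "0 \<le> y" "y \<noteq> 0" "y \<le> A *v y"
  shows "\<not> bdd_above (range (\<lambda>n. \<Sum>k\<in>{1..n}. trace (matrix_pow A k)))"
proof
  assume "bdd_above (range (\<lambda>n. \<Sum>k\<in>{1..n}. trace (matrix_pow A k)))"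
  then obtain B where B: "\<And>n. (\<Sum>k\<in>{1..n}. trace (matrix_pow A k)) \<le> B"
    by (auto simp: bdd_above_def)
  obtain c K where c: "c > 0" "\<And>n. c \<le> (\<Sum>k\<in>{1..K}. trace (matrix_pow A (n + k)))"
    using trace_pow_block_sum_lower_bound[OF A irred y] by blast
  obtain q :: nat where "B / c < q" using reals_Archimedean2 by blast
  hence "B < real q * c" using c(1) by (simp add: field_simps)
  also have "\<dots> \<le> (\<Sum>k\<in>{1..q * K}. trace (matrix_pow A k))" by (rule block_sum_lower_bound[OF c(2)])
  finally show False using B by (meson not_le)
qed

section \<open>The non-backtracking edge graph\<close>

lemma card_eq_sum_card_fibres:
  fixes h :: "'a \<Rightarrow> 'b::finite"
  assumes "finite X"
  shows "card X = (\<Sum>y\<in>UNIV. card {x\<in>X. h x = y})"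
  using sum.group[OF assms, of UNIV h "\<lambda>_. 1 :: nat"] by simp

locale length_graph =
  fixes org tau :: "'e::finite \<Rightarrow> 'v::finite" and bar :: "'e \<Rightarrow> 'e" and l :: "'e \<Rightarrow> real"
  assumes serre: "serre_graph org tau bar"
    and connected: "graph_connected org tau"
    and euler_neg: "euler_char org < 0"
    and valence_not_1_2: "\<forall>v. valence org v \<noteq> 1 \<and> valence org v \<noteq> 2"
    and length: "length_fun bar l"
begin

lemma bar_bar [simp]: "bar (bar e) = e"
  and org_bar [simp]: "org (bar e) = tau e"
  using serre unfolding serre_graph_def by blast+

lemma tau_bar [simp]: "tau (bar e) = org e"
  by (metis org_bar bar_bar)

lemma l_pos: "l e > 0"
  using length unfolding length_fun_def by blast

definition edge_succ :: "'e \<Rightarrow> 'e \<Rightarrow> bool" where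
  "edge_succ e f \<longleftrightarrow> tau e = org f \<and> f \<noteq> bar e"

lemma card_in_edges_eq_card_out_edges: "card {f. tau f = v} = card {g. org g = v}"
proof -
  have "bar ` {g. org g = v} = {f. tau f = v}"
    by (auto simp: image_iff) (metis bar_bar tau_bar)
  moreover have "inj_on bar {g. org g = v}" by (metis bar_bar inj_onI)
  ultimately show ?thesis by (metis card_image)
qed

lemma vertex_induct:
  assumes "P v" "\<And>e. P (org e) \<Longrightarrow> P (tau e)"
  shows "P w"
proof -
  have "(\<lambda>x y. \<exists>e. org e = x \<and> tau e = y)\<^sup>*\<^sup>* v w"
    using connected unfolding graph_connected_def by blast
  thus ?thesis by (induction rule: rtranclp_induct) (use assms in blast)+
qed

text \<open>The hypothesis on the Euler characteristic only serves to exclude the graph consisting of a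
  single vertex and no edges.\<close>

lemma valence_ge_3: "card {g. org g = v} \<ge> 3"
proof -
  have "{g. org g = v} \<noteq> {}"
  proof
    assume none: "{g. org g = v} = {}"
    have single: "w = v" for w by (rule vertex_induct[of "\<lambda>w. w = v"]) (use none in auto)
    hence univ: "(UNIV :: 'v set) = {v}" by blast
    have "CARD('v) = 1" by (simp add: univ)
    hence "CARD('e) > 0" using euler_neg unfolding euler_char_def by simp
    then obtain e :: 'e where True by blast
    show False using none single[of "org e"] by blast
  qed
  hence "card {g. org g = v} \<noteq> 0" by simp
  moreover have "card {g. org g = v} \<noteq> 1" "card {g. org g = v} \<noteq> 2"
    using valence_not_1_2 unfolding valence_def by auto
  ultimately show ?thesis by linarith
qed

lemma ex_edge_succ: "\<exists>f. edge_succ e f"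
proof -
  have "\<not> {g. org g = tau e} \<subseteq> {bar e}"
    using valence_ge_3[of "tau e"] card_mono[of "{bar e}" "{g. org g = tau e}"] by auto
  thus ?thesis unfolding edge_succ_def by auto
qed

text \<open>A set X of edges closed under successors: if an edge of X enters v, all edges leaving v except
  possibly one lie in X. As every valence is at least 3, at each vertex fewer edges of X enter than
  leave unless all leaving edges lie in X; summing over the vertices forces the latter.\<close>

context
  fixes X :: "'e set"
  assumes succ_closed: "\<And>f g. f \<in> X \<Longrightarrow> edge_succ f g \<Longrightarrow> g \<in> X"
begin

lemma succ_closed_in_lt_out:
  assumes "f \<in> X" "tau f = v" "org g = v" "g \<notin> X"
  shows "card {f\<in>X. tau f = v} < card {g\<in>X. org g = v}"
proof -
  have "f' = bar g" if "f' \<in> X" "tau f' = v" for f'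
  proof (rule ccontr)
    assume "f' \<noteq> bar g"
    hence "g \<noteq> bar f'" by auto
    thus False using succ_closed[OF that(1)] assms(3,4) that(2) unfolding edge_succ_def by simp
  qed
  hence "{f\<in>X. tau f = v} \<subseteq> {bar g}" by blast
  hence in_le_1: "card {f\<in>X. tau f = v} \<le> 1" using card_mono[of "{bar g}"] by simp
  have "{g'. org g' = v} \<subseteq> insert (bar f) {g\<in>X. org g = v}"
    using succ_closed[OF assms(1)] assms(2) unfolding edge_succ_def by auto
  hence "card {g'. org g' = v} \<le> card (insert (bar f) {g\<in>X. org g = v})" by (intro card_mono) auto
  also have "\<dots> \<le> Suc (card {g\<in>X. org g = v})" by (simp add: card_insert_if)
  finally show ?thesis using in_le_1 valence_ge_3[of v] by linarith
qed

lemma succ_closed_in_le_out: "card {f\<in>X. tau f = v} \<le> card {g\<in>X. org g = v}"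
proof (cases "{g. org g = v} \<subseteq> X")
  case True
  have "card {f\<in>X. tau f = v} \<le> card {f. tau f = v}" by (intro card_mono) auto
  also have "\<dots> = card {g. org g = v}" by (rule card_in_edges_eq_card_out_edges)
  also have "{g. org g = v} = {g\<in>X. org g = v}" using True by blast
  finally show ?thesis .
next
  case False
  then obtain g where "org g = v" "g \<notin> X" by blast
  show ?thesis
  proof (cases "\<exists>f\<in>X. tau f = v")
    case True
    then obtain f where "f \<in> X" "tau f = v" by blast
    thus ?thesis using succ_closed_in_lt_out[of f v g] \<open>org g = v\<close> \<open>g \<notin> X\<close> by simp
  next
    case False
    hence "card {f\<in>X. tau f = v} = 0" by (simp add: card_eq_0_iff)
    thus ?thesis by linarith
  qed
qed

lemma succ_closed_eq_UNIV:
  assumes "X \<noteq> {}"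
  shows "X = UNIV"
proof -
  have in_eq_out: "card {f\<in>X. tau f = v} = card {g\<in>X. org g = v}" for v
  proof (rule ccontr)
    assume "card {f\<in>X. tau f = v} \<noteq> card {g\<in>X. org g = v}"
    hence "card {f\<in>X. tau f = v} < card {g\<in>X. org g = v}"
      using succ_closed_in_le_out[of v] by linarith
    hence "(\<Sum>v\<in>UNIV. card {f\<in>X. tau f = v}) < (\<Sum>v\<in>UNIV. card {g\<in>X. org g = v})"
      using succ_closed_in_le_out by (intro sum_strict_mono_ex1) auto
    thus False using card_eq_sum_card_fibres[of X tau] card_eq_sum_card_fibres[of X org] by simp
  qed
  have out_edges: "g \<in> X" if "f \<in> X" "tau f = org g" for f g
  proof (rule ccontr)
    assume "g \<notin> X"
    from succ_closed_in_lt_out[OF that refl this] in_eq_out show False by simp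
  qed
  obtain f0 where "f0 \<in> X" using assms by blast
  have "\<exists>f\<in>X. tau f = w" for w
  proof (rule vertex_induct[of _ "tau f0"])
    show "\<exists>f\<in>X. tau f = tau f0" using \<open>f0 \<in> X\<close> by blast
  next
    fix e assume "\<exists>f\<in>X. tau f = org e"
    hence "e \<in> X" using out_edges by blast
    thus "\<exists>f\<in>X. tau f = tau e" by blast
  qed
  thus ?thesis using out_edges by blast
qed

end

lemma edge_walk_exists: "\<exists>ws. successively edge_succ (e # ws @ [f])"
proof -
  have "{f. \<exists>ws. successively edge_succ (e # ws @ [f])} = UNIV"
  proof (rule succ_closed_eq_UNIV)
    fix f g assume "f \<in> {f. \<exists>ws. successively edge_succ (e # ws @ [f])}" "edge_succ f g"
    then obtain ws where "successively edge_succ (e # ws @ [f])" by auto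
    hence "successively edge_succ ((e # ws @ [f]) @ [g])"
      using \<open>edge_succ f g\<close> by (subst successively_append_iff) simp
    thus "g \<in> {f. \<exists>ws. successively edge_succ (e # ws @ [f])}"
      by (auto intro!: exI[of _ "ws @ [f]"])
  next
    obtain g where "edge_succ e g" using ex_edge_succ by blast
    hence "successively edge_succ (e # [] @ [g])" by simp
    thus "{f. \<exists>ws. successively edge_succ (e # ws @ [f])} \<noteq> {}" by blast
  qed
  thus ?thesis by blast
qed

section \<open>Circuit counts and entropy\<close>

definition path_length :: "'e list \<Rightarrow> real" where
  "path_length \<gamma> = sum_list (map l \<gamma>)"

lemma path_length_simps [simp]:
  "path_length [] = 0" "path_length (e # \<gamma>) = l e + path_length \<gamma>"
  "path_length (\<gamma> @ \<delta>) = path_length \<gamma> + path_length \<delta>"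
  by (simp_all add: path_length_def)

definition min_length :: real where
  "min_length = Min (range l)"

lemma min_length_pos: "min_length > 0"
proof -
  have "min_length \<in> range l" unfolding min_length_def by (rule Min_in) auto
  thus ?thesis using l_pos by auto
qed

lemma path_length_ge: "min_length * real (length \<gamma>) \<le> path_length \<gamma>"
proof (induction \<gamma>)
  case (Cons e \<gamma>)
  have "min_length \<le> l e" unfolding min_length_def by simp
  with Cons show ?case by (simp add: algebra_simps)
qed simp

lemma path_length_nonneg: "path_length \<gamma> \<ge> 0"
proof -
  have "0 \<le> min_length * real (length \<gamma>)" using min_length_pos by simp
  thus ?thesis using path_length_ge[of \<gamma>] by linarith
qed

lemma length_le_of_path_length: "path_length \<gamma> \<le> t \<Longrightarrow> length \<gamma> \<le> nat \<lfloor>t / min_length\<rfloor>"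
  using path_length_ge[of \<gamma>] min_length_pos by (intro le_nat_floor) (simp add: le_divide_eq mult.commute)

lemma finite_bounded_length: "finite {\<gamma>. P \<gamma> \<and> path_length \<gamma> \<le> t}"
proof (rule finite_subset)
  show "{\<gamma>. P \<gamma> \<and> path_length \<gamma> \<le> t} \<subseteq> {\<gamma>. set \<gamma> \<subseteq> UNIV \<and> length \<gamma> \<le> nat \<lfloor>t / min_length\<rfloor>}"
    using length_le_of_path_length by auto
qed (rule finite_lists_length_le, simp)

lemma based_circuit_iff:
  "based_circuit org tau bar \<gamma> \<longleftrightarrow> \<gamma> \<noteq> [] \<and> successively edge_succ (\<gamma> @ [hd \<gamma>])"
proof (cases "\<gamma> = []")
  case False
  have next_eq: "(\<gamma> @ [hd \<gamma>]) ! Suc i = \<gamma> ! ((i + 1) mod length \<gamma>)" if "i < length \<gamma>" for i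
  proof (cases "Suc i < length \<gamma>")
    case False
    hence "Suc i = length \<gamma>" using that by simp
    thus ?thesis using \<open>\<gamma> \<noteq> []\<close> by (simp add: nth_append hd_conv_nth)
  qed (simp add: nth_append)
  have "based_circuit org tau bar \<gamma> \<longleftrightarrow> (\<forall>i < length \<gamma>. edge_succ (\<gamma> ! i) (\<gamma> ! ((i + 1) mod length \<gamma>)))"
    unfolding based_circuit_def edge_succ_def using False by auto
  also have "\<dots> \<longleftrightarrow> successively edge_succ (\<gamma> @ [hd \<gamma>])"
    unfolding successively_conv_nth using next_eq by (auto simp: nth_append)
  finally show ?thesis using False by simp
qed (simp add: based_circuit_def)

lemma based_circuit_append:
  assumes "based_circuit org tau bar \<gamma>" "based_circuit org tau bar \<delta>" "hd \<gamma> = hd \<delta>"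
  shows "based_circuit org tau bar (\<gamma> @ \<delta>)"
proof -
  have "successively edge_succ \<gamma>" "edge_succ (last \<gamma>) (hd \<delta>)"
    "successively edge_succ (\<delta> @ [hd \<delta>])" "\<delta> \<noteq> []"
    using assms unfolding based_circuit_iff by (auto simp: successively_append_iff)
  thus ?thesis using assms(1,3) unfolding based_circuit_iff by (auto simp: successively_append_iff)
qed

definition circuits_at :: "'e \<Rightarrow> real \<Rightarrow> 'e list set" where
  "circuits_at e t = {\<gamma>. based_circuit org tau bar \<gamma> \<and> hd \<gamma> = e \<and> path_length \<gamma> \<le> t}"

lemma finite_circuits_at: "finite (circuits_at e t)"
  unfolding circuits_at_def using finite_bounded_length[of "\<lambda>\<gamma>. based_circuit org tau bar \<gamma> \<and> hd \<gamma> = e"]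
  by (simp add: conj_assoc)

lemma circuit_count_eq_sum: "circuit_count org tau bar l t = (\<Sum>e\<in>UNIV. card (circuits_at e t))"
proof -
  define X where "X = {\<gamma>. based_circuit org tau bar \<gamma> \<and> path_length \<gamma> \<le> t}"
  have "card X = (\<Sum>e\<in>UNIV. card {\<gamma>\<in>X. hd \<gamma> = e})"
    unfolding X_def by (rule card_eq_sum_card_fibres[OF finite_bounded_length])
  moreover have "{\<gamma>\<in>X. hd \<gamma> = e} = circuits_at e t" for e unfolding X_def circuits_at_def by auto
  ultimately show ?thesis unfolding circuit_count_def X_def path_length_def by simp
qed

text \<open>Concatenation of circuits based at e is injective once the number of edges of the first factor
  is recorded, and there are at most 1 + a / min_length possibilities for it.\<close>

lemma circuits_at_supermultiplicative:
  assumes "a \<ge> 0"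
  shows "real (card (circuits_at e a)) * real (card (circuits_at e b))
           \<le> (1 + a / min_length) * real (card (circuits_at e (a + b)))"
proof -
  define m where "m = nat \<lfloor>a / min_length\<rfloor>"
  define f where "f = (\<lambda>(\<gamma>, \<delta>). (length \<gamma>, \<gamma> @ (\<delta> :: 'e list)))"
  have "inj_on f (circuits_at e a \<times> circuits_at e b)"
    unfolding f_def by (auto simp: inj_on_def)
  moreover have "f ` (circuits_at e a \<times> circuits_at e b) \<subseteq> {0..m} \<times> circuits_at e (a + b)"
  proof (rule image_subsetI)
    fix p assume "p \<in> circuits_at e a \<times> circuits_at e b"
    then obtain \<gamma> \<delta> where p: "p = (\<gamma>, \<delta>)" "\<gamma> \<in> circuits_at e a" "\<delta> \<in> circuits_at e b" by auto
    hence \<gamma>: "based_circuit org tau bar \<gamma>" "hd \<gamma> = e" "path_length \<gamma> \<le> a"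
      and \<delta>: "based_circuit org tau bar \<delta>" "hd \<delta> = e" "path_length \<delta> \<le> b"
      unfolding circuits_at_def by auto
    have "\<gamma> \<noteq> []" using \<gamma>(1) by (simp add: based_circuit_def)
    moreover have "based_circuit org tau bar (\<gamma> @ \<delta>)" using based_circuit_append \<gamma> \<delta> by simp
    moreover have "length \<gamma> \<le> m" unfolding m_def using length_le_of_path_length \<gamma>(3) .
    ultimately show "f p \<in> {0..m} \<times> circuits_at e (a + b)"
      using p \<gamma> \<delta> unfolding f_def circuits_at_def by auto
  qed
  ultimately have "card (circuits_at e a \<times> circuits_at e b) \<le> card ({0..m} \<times> circuits_at e (a + b))"
    by (intro card_inj_on_le) (simp_all add: finite_circuits_at)
  hence "card (circuits_at e a) * card (circuits_at e b) \<le> (m + 1) * card (circuits_at e (a + b))"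
    by (simp add: card_cartesian_product)
  hence "real (card (circuits_at e a)) * real (card (circuits_at e b))
           \<le> real (m + 1) * real (card (circuits_at e (a + b)))"
    by (metis of_nat_le_iff of_nat_mult)
  also have "\<dots> \<le> (1 + a / min_length) * real (card (circuits_at e (a + b)))"
    unfolding m_def using assms min_length_pos by (intro mult_right_mono) simp_all
  finally show ?thesis .
qed

lemma circuits_at_eventually_nonempty: "\<exists>t0\<ge>0. \<forall>t\<ge>t0. 1 \<le> real (card (circuits_at e t))"
proof -
  obtain ws where "successively edge_succ (e # ws @ [e])" using edge_walk_exists by blast
  hence "based_circuit org tau bar (e # ws)" unfolding based_circuit_iff by simp
  hence "e # ws \<in> circuits_at e t" if "t \<ge> path_length (e # ws)" for t
    unfolding circuits_at_def using that by simp
  hence nonempty: "0 < card (circuits_at e t)" if "t \<ge> path_length (e # ws)" for t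
    using that finite_circuits_at[of e t] by (auto simp: card_gt_0_iff)
  show ?thesis
  proof (intro exI conjI allI impI)
    show "0 \<le> path_length (e # ws)" by (rule path_length_nonneg)
    fix t assume "path_length (e # ws) \<le> t"
    thus "1 \<le> real (card (circuits_at e t))" using nonempty by (simp add: Suc_le_eq)
  qed
qed

lemma circuits_at_log_bound:
  assumes "t \<ge> 0"
  shows "ln (real (card (circuits_at e t))) \<le> ln (2 * real CARD('e)) / min_length * t"
proof (cases "card (circuits_at e t) = 0")
  case False
  define n where "n = nat \<lfloor>t / min_length\<rfloor>"
  define C where "C = CARD('e)"
  have C: "C \<ge> 1" unfolding C_def by (simp add: Suc_leI)
  have "circuits_at e t \<subseteq> {\<gamma>. set \<gamma> \<subseteq> UNIV \<and> length \<gamma> \<le> n}"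
    unfolding circuits_at_def n_def using length_le_of_path_length by auto
  hence "card (circuits_at e t) \<le> card {\<gamma>. set \<gamma> \<subseteq> (UNIV :: 'e set) \<and> length \<gamma> \<le> n}"
    by (intro card_mono finite_lists_length_le) simp_all
  also have "\<dots> = (\<Sum>i\<le>n. C ^ i)" unfolding C_def by (rule card_lists_length_le) simp
  also have "\<dots> \<le> Suc n * C ^ n"
    using sum_bounded_above[of "{..n}" "\<lambda>i. C ^ i" "C ^ n"] C by (simp add: power_increasing)
  also have "\<dots> \<le> (2 * C) ^ n"
    unfolding power_mult_distrib using less_exp[of n] by (intro mult_right_mono) (simp_all add: Suc_le_eq)
  finally have "real (card (circuits_at e t)) \<le> (2 * real C) ^ n" by (metis of_nat_le_iff of_nat_mult of_nat_numeral of_nat_power)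
  hence "ln (real (card (circuits_at e t))) \<le> real n * ln (2 * real C)"
    using False C by (subst ln_realpow[symmetric]) (auto intro: ln_mono)
  also have "\<dots> \<le> t / min_length * ln (2 * real C)"
    unfolding n_def using assms min_length_pos C by (intro mult_right_mono) simp_all
  finally show ?thesis unfolding C_def by (simp add: field_simps)
next
  case True
  have "1 \<le> real CARD('e)" by (simp add: Suc_leI)
  hence "0 \<le> ln (2 * real CARD('e))" by (intro ln_ge_zero) linarith
  thus ?thesis using True assms min_length_pos by simp
qed

lemma circuits_at_log_growth: "\<exists>H. ((\<lambda>t. ln (real (card (circuits_at e t))) / t) \<longlongrightarrow> H) at_top"
proof -
  obtain t0 where t0: "t0 \<ge> 0" and ge1: "\<And>t. t \<ge> t0 \<Longrightarrow> 1 \<le> real (card (circuits_at e t))"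
    using circuits_at_eventually_nonempty by blast
  have "ln (real (card (circuits_at e t))) \<le> ln (2 * real CARD('e)) / min_length * t" if "t \<ge> t0" for t
    by (rule circuits_at_log_bound) (use that t0 in linarith)
  from log_growth_of_supermultiplicative[OF min_length_pos t0 ge1 this circuits_at_supermultiplicative]
  show ?thesis .
qed

lemma entropy_tendsto:
  "((\<lambda>t. ln (real (circuit_count org tau bar l t)) / t) \<longlongrightarrow> entropy org tau bar l) at_top"
proof -
  obtain H where "\<And>e. ((\<lambda>t. ln (real (card (circuits_at e t))) / t) \<longlongrightarrow> H e) at_top"
    using circuits_at_log_growth by metis
  moreover have "eventually (\<lambda>t. 1 \<le> real (card (circuits_at e t))) at_top" for e
    using circuits_at_eventually_nonempty[of e] by (auto simp: eventually_at_top_linorder)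
  ultimately have "((\<lambda>t. ln (real (circuit_count org tau bar l t)) / t) \<longlongrightarrow> (SUP e. H e)) at_top"
    using log_growth_sum[of "\<lambda>e t. real (card (circuits_at e t))"] by (simp add: circuit_count_eq_sum)
  thus ?thesis unfolding entropy_def by (simp add: tendsto_Lim)
qed

section \<open>Traces of the transition matrix\<close>

lemma trans_matrix_nth: "trans_matrix org tau bar l $ e $ f = (if edge_succ e f then exp (- l e) else 0)"
  by (simp add: trans_matrix_def edge_succ_def)

lemma trans_matrix_nonneg: "0 \<le> trans_matrix org tau bar l"
  by (simp add: matrix_nonneg_iff trans_matrix_nth)

lemma trans_matrix_irreducible: "irreducible_matrix (trans_matrix org tau bar l)"
  unfolding irreducible_matrix_def
proof (intro allI)
  fix e f
  obtain ws where "successively edge_succ (e # ws @ [f])" using edge_walk_exists by blast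
  hence "successively (\<lambda>i j. 0 < trans_matrix org tau bar l $ i $ j) (e # ws @ [f])"
    by (rule successively_mono) (simp add: trans_matrix_nth)
  from matrix_pow_pos_of_walk[OF trans_matrix_nonneg this]
  show "\<exists>k\<ge>1. 0 < matrix_pow (trans_matrix org tau bar l) k $ e $ f"
    by (intro exI[of _ "length (ws @ [f])"]) simp
qed

definition walks :: "nat \<Rightarrow> 'e \<Rightarrow> 'e \<Rightarrow> 'e list set" where
  "walks n e f = {ws. length ws = n \<and> successively edge_succ (e # ws) \<and> last (e # ws) = f}"

lemma finite_walks: "finite (walks n e f)"
proof (rule finite_subset)
  show "walks n e f \<subseteq> {ws. set ws \<subseteq> UNIV \<and> length ws = n}" unfolding walks_def by auto
qed (rule finite_lists_length_eq, simp)

lemma walks_Suc: "walks (Suc n) e f = (\<lambda>(g, ws). g # ws) ` (SIGMA g:{g. edge_succ e g}. walks n g f)"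
  by (auto simp: walks_def image_iff length_Suc_conv)

lemma matrix_pow_trans_matrix:
  "matrix_pow (trans_matrix org tau bar l) n $ e $ f = (\<Sum>ws\<in>walks n e f. exp (- path_length (butlast (e # ws))))"
proof (induction n arbitrary: e)
  case 0
  have "walks 0 e f = (if e = f then {[]} else {})" unfolding walks_def by auto
  thus ?case by (simp add: mat_def)
next
  case (Suc n)
  have inj: "inj_on (\<lambda>(g, ws). g # ws) (SIGMA g:{g. edge_succ e g}. walks n g f)"
    by (auto simp: inj_on_def)
  have "(\<Sum>ws\<in>walks (Suc n) e f. exp (- path_length (butlast (e # ws))))
        = (\<Sum>(g, ws)\<in>(SIGMA g:{g. edge_succ e g}. walks n g f). exp (- path_length (butlast (e # g # ws))))"
    unfolding walks_Suc sum.reindex[OF inj] by (simp add: case_prod_unfold)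
  also have "\<dots> = (\<Sum>g\<in>{g. edge_succ e g}. \<Sum>ws\<in>walks n g f. exp (- l e) * exp (- path_length (butlast (g # ws))))"
    by (subst sum.Sigma[symmetric]) (auto simp: finite_walks exp_add[symmetric] exp_diff)
  also have "\<dots> = (\<Sum>g\<in>{g. edge_succ e g}. exp (- l e) * matrix_pow (trans_matrix org tau bar l) n $ g $ f)"
    by (simp add: Suc sum_distrib_left)
  also have "\<dots> = (\<Sum>g\<in>UNIV. trans_matrix org tau bar l $ e $ g * matrix_pow (trans_matrix org tau bar l) n $ g $ f)"
    using sum.inter_filter[of UNIV "\<lambda>g. exp (- l e) * matrix_pow (trans_matrix org tau bar l) n $ g $ f" "edge_succ e"]
    by (simp add: trans_matrix_nth if_distrib[of "\<lambda>x. x * _"] cong: if_cong)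
  finally show ?case by (simp add: matrix_matrix_mult_def)
qed

lemma finite_circuits_length_le: "finite {\<gamma>. based_circuit org tau bar \<gamma> \<and> length \<gamma> \<le> n}"
proof (rule finite_subset)
  show "{\<gamma>. based_circuit org tau bar \<gamma> \<and> length \<gamma> \<le> n} \<subseteq> {\<gamma>. set \<gamma> \<subseteq> UNIV \<and> length \<gamma> \<le> n}" by auto
qed (rule finite_lists_length_le, simp)

lemma closed_walk_weight:
  assumes "n \<ge> 1"
  shows "(\<Sum>ws\<in>walks n e e. exp (- path_length (butlast (e # ws))))
           = (\<Sum>\<gamma>\<in>{\<gamma>. based_circuit org tau bar \<gamma> \<and> length \<gamma> = n \<and> hd \<gamma> = e}. exp (- path_length \<gamma>))"
proof (rule sum.reindex_bij_witness[where i = "\<lambda>\<gamma>. tl \<gamma> @ [e]" and j = "\<lambda>ws. e # butlast ws"])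
  fix \<gamma> assume "\<gamma> \<in> {\<gamma>. based_circuit org tau bar \<gamma> \<and> length \<gamma> = n \<and> hd \<gamma> = e}"
  hence "successively edge_succ (\<gamma> @ [e])" "length \<gamma> = n" "\<gamma> \<noteq> []" "hd \<gamma> = e"
    unfolding based_circuit_iff by auto
  then obtain \<gamma>' where \<gamma>: "\<gamma> = e # \<gamma>'" "successively edge_succ (e # \<gamma>' @ [e])" "length \<gamma>' + 1 = n"
    by (cases \<gamma>) auto
  show "e # butlast (tl \<gamma> @ [e]) = \<gamma>" using \<gamma>(1) by simp
  show "tl \<gamma> @ [e] \<in> walks n e e" using \<gamma> unfolding walks_def by simp
next
  fix ws assume "ws \<in> walks n e e"
  hence ws: "length ws = n" "successively edge_succ (e # ws)" "last (e # ws) = e" unfolding walks_def by auto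
  then obtain ws' where ws': "ws = ws' @ [e]" using assms by (cases ws rule: rev_cases) auto
  show "tl (e # butlast ws) @ [e] = ws" using ws' by simp
  show "e # butlast ws \<in> {\<gamma>. based_circuit org tau bar \<gamma> \<and> length \<gamma> = n \<and> hd \<gamma> = e}"
    unfolding based_circuit_iff using ws ws' by auto
  show "exp (- path_length (e # butlast ws)) = exp (- path_length (butlast (e # ws)))"
    using ws' by simp
qed

lemma trace_matrix_pow:
  assumes "n \<ge> 1"
  shows "trace (matrix_pow (trans_matrix org tau bar l) n)
           = (\<Sum>\<gamma>\<in>{\<gamma>. based_circuit org tau bar \<gamma> \<and> length \<gamma> = n}. exp (- path_length \<gamma>))"
proof -
  define C where "C = {\<gamma>. based_circuit org tau bar \<gamma> \<and> length \<gamma> = n}"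
  have "finite C" unfolding C_def by (rule finite_subset[OF _ finite_circuits_length_le[of n]]) auto
  moreover have "{\<gamma>. based_circuit org tau bar \<gamma> \<and> length \<gamma> = n \<and> hd \<gamma> = e} = {\<gamma>\<in>C. hd \<gamma> = e}" for e
    unfolding C_def by auto
  ultimately show ?thesis
    unfolding trace_def matrix_pow_trans_matrix closed_walk_weight[OF assms] C_def[symmetric]
    by (simp add: sum.group)
qed

lemma trace_partial_sum:
  "(\<Sum>k\<in>{1..n}. trace (matrix_pow (trans_matrix org tau bar l) k))
     = (\<Sum>\<gamma>\<in>{\<gamma>. based_circuit org tau bar \<gamma> \<and> length \<gamma> \<le> n}. exp (- path_length \<gamma>))"
proof -
  have "(\<Sum>k\<in>{1..n}. trace (matrix_pow (trans_matrix org tau bar l) k))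
      = (\<Sum>k\<in>{1..n}. \<Sum>\<gamma>\<in>{\<gamma>\<in>{\<gamma>. based_circuit org tau bar \<gamma> \<and> length \<gamma> \<le> n}. length \<gamma> = k}. exp (- path_length \<gamma>))"
    by (intro sum.cong refl) (auto simp: trace_matrix_pow intro!: sum.cong)
  also have "\<dots> = (\<Sum>\<gamma>\<in>{\<gamma>. based_circuit org tau bar \<gamma> \<and> length \<gamma> \<le> n}. exp (- path_length \<gamma>))"
    by (rule sum.group[OF finite_circuits_length_le]) (simp, auto simp: based_circuit_iff Suc_le_eq)
  finally show ?thesis .
qed

lemma circuit_count_mono: "t \<le> t' \<Longrightarrow> circuit_count org tau bar l t \<le> circuit_count org tau bar l t'"
  unfolding circuit_count_def
  using finite_bounded_length[of "based_circuit org tau bar" t'] unfolding path_length_def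
  by (intro card_mono) auto

lemma circuit_count_exp_bound:
  assumes "entropy org tau bar l < 1"
  obtains s C where "s < 1" "C \<ge> 0" "\<And>t. t \<ge> 0 \<Longrightarrow> real (circuit_count org tau bar l t) \<le> C * exp (s * t)"
proof -
  obtain s where s: "max (entropy org tau bar l) 0 < s" "s < 1"
    using dense[of "max (entropy org tau bar l) 0" 1] assms by auto
  have "eventually (\<lambda>t. ln (real (circuit_count org tau bar l t)) / t < s \<and> t > 0) at_top"
    using order_tendstoD(2)[OF entropy_tendsto] s(1) eventually_gt_at_top[of 0]
    by (auto intro: eventually_conj)
  then obtain T where T: "\<And>t. t \<ge> T \<Longrightarrow> ln (real (circuit_count org tau bar l t)) / t < s \<and> t > 0"
    unfolding eventually_at_top_linorder by blast
  define C where "C = max 1 (real (circuit_count org tau bar l T))"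
  have C_le: "C \<le> C * exp (s * t)" if "t \<ge> 0" for t
  proof -
    have "1 \<le> exp (s * t)" using s that by simp
    thus ?thesis using mult_left_mono[of 1 "exp (s * t)" C] unfolding C_def by simp
  qed
  have "real (circuit_count org tau bar l t) \<le> C * exp (s * t)" if "t \<ge> 0" for t
  proof (cases "t \<ge> T")
    case True
    have "real (circuit_count org tau bar l t) \<le> exp (s * t)"
    proof (cases "circuit_count org tau bar l t = 0")
      case False
      hence "ln (real (circuit_count org tau bar l t)) < s * t"
        using T[OF True] by (simp add: divide_less_eq mult.commute)
      have "real (circuit_count org tau bar l t) = exp (ln (real (circuit_count org tau bar l t)))"
        using False by simp
      also have "\<dots> \<le> exp (s * t)" using \<open>ln _ < s * t\<close> by simp
      finally show ?thesis .
    qed simp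
    also have "\<dots> \<le> C * exp (s * t)" unfolding C_def by simp
    finally show ?thesis .
  next
    case False
    have "real (circuit_count org tau bar l t) \<le> C" unfolding C_def using False circuit_count_mono[of t T] by simp
    also have "\<dots> \<le> C * exp (s * t)" using C_le[OF that] .
    finally show ?thesis .
  qed
  moreover have "C \<ge> 0" unfolding C_def by simp
  ultimately show ?thesis using that s(2) by blast
qed

lemma circuit_weight_sum_le:
  assumes s: "s < 1" and C: "C \<ge> 0"
    and count: "\<And>t. t \<ge> 0 \<Longrightarrow> real (circuit_count org tau bar l t) \<le> C * exp (s * t)"
    and X: "finite X" "\<And>\<gamma>. \<gamma> \<in> X \<Longrightarrow> based_circuit org tau bar \<gamma>"
  shows "(\<Sum>\<gamma>\<in>X. exp (- path_length \<gamma>)) \<le> C * exp 1 / (1 - exp (s - 1))"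
proof -
  define q where "q = exp (s - 1)"
  have q: "0 < q" "q < 1" unfolding q_def using s by auto
  define c where "c \<gamma> = nat \<lceil>path_length \<gamma>\<rceil>" for \<gamma>
  have c: "path_length \<gamma> \<le> real (c \<gamma>)" "real (c \<gamma>) \<le> path_length \<gamma> + 1" for \<gamma>
    unfolding c_def using path_length_nonneg[of \<gamma>] by linarith+
  have "(\<Sum>\<gamma>\<in>X. exp (- path_length \<gamma>)) \<le> (\<Sum>\<gamma>\<in>X. exp 1 * exp (- real (c \<gamma>)))"
  proof (rule sum_mono)
    fix \<gamma>
    have "- path_length \<gamma> \<le> 1 + - real (c \<gamma>)" using c[of \<gamma>] by linarith
    thus "exp (- path_length \<gamma>) \<le> exp 1 * exp (- real (c \<gamma>))" by (simp add: exp_add[symmetric])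
  qed
  also have "\<dots> = (\<Sum>k\<in>c ` X. \<Sum>\<gamma>\<in>{\<gamma>\<in>X. c \<gamma> = k}. exp 1 * exp (- real (c \<gamma>)))"
    by (rule sum.group[symmetric]) (use X(1) in auto)
  also have "\<dots> = (\<Sum>k\<in>c ` X. exp 1 * exp (- real k) * real (card {\<gamma>\<in>X. c \<gamma> = k}))"
    by (rule sum.cong) auto
  also have "\<dots> \<le> (\<Sum>k\<in>c ` X. C * exp 1 * q ^ k)"
  proof (rule sum_mono)
    fix k
    have "{\<gamma>\<in>X. c \<gamma> = k} \<subseteq> {\<gamma>. based_circuit org tau bar \<gamma> \<and> path_length \<gamma> \<le> real k}"
      using X(2) c by auto
    hence "card {\<gamma>\<in>X. c \<gamma> = k} \<le> circuit_count org tau bar l (real k)"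
      unfolding circuit_count_def path_length_def[symmetric] by (rule card_mono[OF finite_bounded_length])
    hence "real (card {\<gamma>\<in>X. c \<gamma> = k}) \<le> C * exp (s * real k)" using count[of "real k"] by simp
    hence "exp 1 * exp (- real k) * real (card {\<gamma>\<in>X. c \<gamma> = k}) \<le> exp 1 * exp (- real k) * (C * exp (s * real k))"
      by (intro mult_left_mono) auto
    also have "\<dots> = C * exp 1 * exp (real k * (s - 1))" by (simp add: algebra_simps exp_add[symmetric])
    finally show "exp 1 * exp (- real k) * real (card {\<gamma>\<in>X. c \<gamma> = k}) \<le> C * exp 1 * q ^ k"
      unfolding q_def by (simp add: exp_of_nat_mult)
  qed
  also have "\<dots> = C * exp 1 * (\<Sum>k\<in>c ` X. q ^ k)" by (simp add: sum_distrib_left)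
  also have "\<dots> \<le> C * exp 1 * (1 / (1 - q))"
    using C q X(1) by (intro mult_left_mono sum_power_le_geometric) auto
  finally show ?thesis using C unfolding q_def by (simp add: mult_left_mono divide_inverse)
qed

lemma trace_partial_sums_bounded:
  assumes "entropy org tau bar l < 1"
  shows "bdd_above (range (\<lambda>n. \<Sum>k\<in>{1..n}. trace (matrix_pow (trans_matrix org tau bar l) k)))"
proof -
  obtain s C where "s < 1" "C \<ge> 0"
    "\<And>t. t \<ge> 0 \<Longrightarrow> real (circuit_count org tau bar l t) \<le> C * exp (s * t)"
    using circuit_count_exp_bound[OF assms] by blast
  from circuit_weight_sum_le[OF this finite_circuits_length_le] show ?thesis
    unfolding trace_partial_sum by (intro bdd_aboveI2) auto
qed

end

theorem mainTheorem8:
  fixes org tau :: "'e::finite \<Rightarrow> 'v::finite" and bar :: "'e \<Rightarrow> 'e" and l :: "'e \<Rightarrow> real"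
  assumes "serre_graph org tau bar"
    and "graph_connected org tau"
    and "euler_char org < 0"
    and "\<forall>v. valence org v \<noteq> 1 \<and> valence org v \<noteq> 2"
    and "length_fun bar l"
    and "entropy org tau bar l < 1"
  shows "F_G org tau bar l > 0"
proof (rule ccontr)
  interpret length_graph org tau bar l using assms(1-5) by unfold_locales
  assume "\<not> F_G org tau bar l > 0"
  then obtain y where y: "0 \<le> y" "y \<noteq> 0" "y \<le> trans_matrix org tau bar l *v y"
    using subinvariant_vector_of_det_nonpos[OF trans_matrix_nonneg] unfolding F_G_def by force
  have "\<not> bdd_above (range (\<lambda>n. \<Sum>k\<in>{1..n}. trace (matrix_pow (trans_matrix org tau bar l) k)))"
    using trace_pow_partial_sums_unbounded[OF trans_matrix_nonneg trans_matrix_irreducible y] .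
  thus False using trace_partial_sums_bounded[OF assms(6)] by contradiction
qed

end
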